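(* Let $\mathcal{S}$ be an inverse semigroupoid. The following are equivalent: (i) $\mathcal{S}$ is $E$-unitary, i.e. $\sigma$ is idempotent pure; (ii) the canonical quotient map $\pi_\sigma:\mathcal{S}\to\mathcal{S}/\sigma$ is idempotent pure, i.e. $\pi_\sigma^{-1}(E(\mathcal{S}/\sigma))\subseteq E(\mathcal{S})$; (iii) if $(s,t)\in\sigma$, then $s^*t\in E(\mathcal{S})$ and $st^*\in E(\mathcal{S})$; (iv) for all $s,t\in\mathcal{S}$, $(s,t)\in\sigma$ if and only if $s^*t\in E(\mathcal{S})$ and $st^*\in E(\mathcal{S})$; (v) if $s\in\mathcal{S}$, $e\in E(\mathcal{S})$ and $e\leqslant s$, then $s\in E(\mathcal{S})$.
   Context: A semigroupoid consists of a set $\mathcal{S}$ of arrows, a set $\mathcal{S}^{(0)}$ of objects, maps $d,c:\mathcal{S}\to\mathcal{S}^{(0)}$, composable pairs $\mathcal{S}^{(2)}=\{(s,t): d(s)=c(t)\}$ and an associative multiplication on $\mathcal{S}^{(2)}$ with $d(st)=d(t)$, $c(st)=c(s)$. It is an inverse semigroupoid if each $s$ has a unique $s^*$ with $(s,s^* ),(s^*,s)\in\mathcal{S}^{(2)}$, $ss^*s=s$, $s^*ss^*=s^*$. $E(\mathcal{S})$ is the set of idempotents. Natural partial order: for parallel $s,t$ (same domain and codomain), $s\leqslant t$ iff $s=te$ for some $e\in E(\mathcal{S})$ with $(t,e)\in\mathcal{S}^{(2)}$. $(s,t)\in\sigma$ iff there is $r$ with $r\leqslant s$ and $r\leqslant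 t$; $\sigma$ is a congruence and the quotient $\mathcal{S}/\sigma$ (arrows the $\sigma$-classes, objects $\mathcal{S}^{(0)}$, $d(\pi_\sigma(s))=d(s)$, $c(\pi_\sigma(s))=c(s)$, $\pi_\sigma(s)\pi_\sigma(t)=\pi_\sigma(st)$) is a groupoid. A congruence $R$ is idempotent pure if $(s,e)\in R$ and $e\in E(\mathcal{S})$ imply $s\in E(\mathcal{S})$. $\mathcal{S}$ is called $E$-unitary if $\sigma$ is idempotent pure. *)

theory Defs
  imports Main
begin

text \<open>A semigroupoid: arrows, objects, domain, codomain, and a (total HOL function) product
  that is only meaningful on composable pairs.\<close>

record ('a, 'b) sgpd =
  arr :: "'a set"
  obj :: "'b set"
  dom :: "'a \<Rightarrow> 'b"
  cod :: "'a \<Rightarrow> 'b"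
  mult :: "'a \<Rightarrow> 'a \<Rightarrow> 'a"

definition composable :: "('a, 'b) sgpd \<Rightarrow> 'a \<Rightarrow> 'a \<Rightarrow> bool" where
  "composable S s t \<longleftrightarrow> s \<in> arr S \<and> t \<in> arr S \<and> dom S s = cod S t"

definition semigroupoid :: "('a, 'b) sgpd \<Rightarrow> bool" where
  "semigroupoid S \<longleftrightarrow>
     (\<forall>s\<in>arr S. dom S s \<in> obj S \<and> cod S s \<in> obj S) \<and>
     (\<forall>s t. composable S s t \<longrightarrow>
        mult S s t \<in> arr S \<and> dom S (mult S s t) = dom S t \<and> cod S (mult S s t) = cod S s) \<and>
     (\<forall>s t u. composable S s t \<and> composable S t u \<longrightarrow>
        mult S (mult S s t) u = mult S s (mult S t u))"

definition is_inverse :: "('a, 'b) sgpd \<Rightarrow> 'a \<Rightarrow> 'a \<Rightarrow> bool" where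
  "is_inverse S s s' \<longleftrightarrow> s' \<in> arr S \<and> composable S s s' \<and> composable S s' s \<and>
     mult S (mult S s s') s = s \<and> mult S (mult S s' s) s' = s'"

definition inverse_semigroupoid :: "('a, 'b) sgpd \<Rightarrow> bool" where
  "inverse_semigroupoid S \<longleftrightarrow> semigroupoid S \<and> (\<forall>s\<in>arr S. \<exists>!s'. is_inverse S s s')"

definition star :: "('a, 'b) sgpd \<Rightarrow> 'a \<Rightarrow> 'a" where
  "star S s = (THE s'. is_inverse S s s')"

definition idems :: "('a, 'b) sgpd \<Rightarrow> 'a set" where
  "idems S = {e \<in> arr S. composable S e e \<and> mult S e e = e}"

definition npo :: "('a, 'b) sgpd \<Rightarrow> 'a \<Rightarrow> 'a \<Rightarrow> bool" where
  "npo S s t \<longleftrightarrow> s \<in> arr S \<and> t \<in> arr S \<and> dom S s = dom S t \<and> cod S s = cod S t \<and>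
     (\<exists>e\<in>idems S. composable S t e \<and> s = mult S t e)"

definition sigma :: "('a, 'b) sgpd \<Rightarrow> ('a \<times> 'a) set" where
  "sigma S = {(s, t). s \<in> arr S \<and> t \<in> arr S \<and> (\<exists>r. npo S r s \<and> npo S r t)}"

definition idempotent_pure :: "('a, 'b) sgpd \<Rightarrow> ('a \<times> 'a) set \<Rightarrow> bool" where
  "idempotent_pure S R \<longleftrightarrow> (\<forall>s e. (s, e) \<in> R \<and> e \<in> idems S \<longrightarrow> s \<in> idems S)"

definition E_unitary :: "('a, 'b) sgpd \<Rightarrow> bool" where
  "E_unitary S \<longleftrightarrow> idempotent_pure S (sigma S)"

definition pi_sigma :: "('a, 'b) sgpd \<Rightarrow> 'a \<Rightarrow> 'a set" where
  "pi_sigma S s = sigma S `` {s}"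

definition quot_sigma :: "('a, 'b) sgpd \<Rightarrow> ('a set, 'b) sgpd" where
  "quot_sigma S =
     \<lparr> arr = pi_sigma S ` arr S,
       obj = obj S,
       dom = (\<lambda>X. dom S (SOME x. x \<in> X)),
       cod = (\<lambda>X. cod S (SOME x. x \<in> X)),
       mult = (\<lambda>X Y. pi_sigma S (mult S (SOME x. x \<in> X) (SOME y. y \<in> Y))) \<rparr>"

definition prod_idem :: "('a, 'b) sgpd \<Rightarrow> 'a \<Rightarrow> 'a \<Rightarrow> bool" where
  "prod_idem S s t \<longleftrightarrow> composable S s t \<and> mult S s t \<in> idems S"

end

theory Submission
  imports Defs
begin

text \<open>
  Everything below an idempotent is idempotent, so an arrow is \<open>\<sigma>\<close>-related to an idempotent
  iff it lies above one. This gives (i) \<open>\<Leftrightarrow>\<close> (v), and since it is also exactly when its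
  \<open>\<sigma>\<close>-class is an idempotent of \<open>S/\<sigma>\<close>, (i) \<open>\<Leftrightarrow>\<close> (ii). If \<open>r = s e = t e\<close> is a common lower bound
  of \<open>s\<close> and \<open>t\<close>, then \<open>s\<^sup>* t\<close> lies above the idempotent \<open>s\<^sup>* r\<close> and \<open>s t\<^sup>*\<close> above the idempotent
  \<open>r t\<^sup>*\<close>, so (v) gives (iii). Conversely \<open>e \<le> s\<close> makes \<open>s\<close> \<open>\<sigma>\<close>-related to \<open>s s\<^sup>*\<close>, and (iii) then
  forces \<open>s\<^sup>*\<close>, hence \<open>s\<close>, to be idempotent. Finally \<open>s (s\<^sup>* t) = (s s\<^sup>*) t\<close> is a common lower
  bound of \<open>s\<close> and \<open>t\<close> whenever \<open>s\<^sup>* t\<close> is idempotent, which is the other half of (iv).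
\<close>

locale inverse_sgpd =
  fixes S :: "('a, 'b) sgpd"
  assumes inverse_semigroupoid: "inverse_semigroupoid S"
begin

abbreviation mlt (infixl "\<cdot>" 70) where "s \<cdot> t \<equiv> mult S s t"

abbreviation st :: "'a \<Rightarrow> 'a" where "st s \<equiv> star S s"

lemma semigroupoid: "semigroupoid S"
  using inverse_semigroupoid unfolding inverse_semigroupoid_def by blast

lemma mult_arr [simp]: "s \<in> arr S \<Longrightarrow> t \<in> arr S \<Longrightarrow> dom S s = cod S t \<Longrightarrow> s \<cdot> t \<in> arr S"
  and dom_mult [simp]: "s \<in> arr S \<Longrightarrow> t \<in> arr S \<Longrightarrow> dom S s = cod S t \<Longrightarrow> dom S (s \<cdot> t) = dom S t"
  and cod_mult [simp]: "s \<in> arr S \<Longrightarrow> t \<in> arr S \<Longrightarrow> dom S s = cod S t \<Longrightarrow> cod S (s \<cdot> t) = cod S s"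
  using semigroupoid unfolding semigroupoid_def composable_def by auto

lemma mult_assoc [simp]:
  "s \<in> arr S \<Longrightarrow> t \<in> arr S \<Longrightarrow> u \<in> arr S \<Longrightarrow> dom S s = cod S t \<Longrightarrow> dom S t = cod S u
    \<Longrightarrow> (s \<cdot> t) \<cdot> u = s \<cdot> (t \<cdot> u)"
  using semigroupoid unfolding semigroupoid_def composable_def by auto

lemma star_is_inverse: "s \<in> arr S \<Longrightarrow> is_inverse S s (st s)"
  using inverse_semigroupoid unfolding inverse_semigroupoid_def star_def by (metis theI')

lemma inverse_unique: "s \<in> arr S \<Longrightarrow> is_inverse S s x \<Longrightarrow> x = st s"
  using inverse_semigroupoid star_is_inverse unfolding inverse_semigroupoid_def by blast

lemma star_arr [simp]: "s \<in> arr S \<Longrightarrow> st s \<in> arr S"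
  and dom_star [simp]: "s \<in> arr S \<Longrightarrow> dom S (st s) = cod S s"
  and cod_star [simp]: "s \<in> arr S \<Longrightarrow> cod S (st s) = dom S s"
  using star_is_inverse[of s] unfolding is_inverse_def composable_def by auto

lemma mult_star_mult [simp]: "s \<in> arr S \<Longrightarrow> s \<cdot> (st s \<cdot> s) = s"
  and star_mult_star [simp]: "s \<in> arr S \<Longrightarrow> st s \<cdot> (s \<cdot> st s) = st s"
  using star_is_inverse[of s] unfolding is_inverse_def composable_def by auto

lemma mult_star_mult_left [simp]:
  "s \<in> arr S \<Longrightarrow> x \<in> arr S \<Longrightarrow> dom S s = cod S x \<Longrightarrow> s \<cdot> (st s \<cdot> (s \<cdot> x)) = s \<cdot> x"
  by (metis mult_assoc mult_arr cod_mult dom_mult mult_star_mult star_arr cod_star dom_star)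

lemma star_mult_star_left [simp]:
  "s \<in> arr S \<Longrightarrow> x \<in> arr S \<Longrightarrow> cod S s = cod S x \<Longrightarrow> st s \<cdot> (s \<cdot> (st s \<cdot> x)) = st s \<cdot> x"
  by (metis mult_assoc mult_arr cod_mult dom_mult star_mult_star star_arr cod_star dom_star)

lemma star_star [simp]: "s \<in> arr S \<Longrightarrow> st (st s) = s"
  by (metis star_is_inverse inverse_unique is_inverse_def composable_def star_arr)

lemma idemsD: "e \<in> idems S \<Longrightarrow> e \<in> arr S \<and> dom S e = cod S e \<and> e \<cdot> e = e"
  unfolding idems_def composable_def by auto

lemma idemsI: "e \<in> arr S \<Longrightarrow> dom S e = cod S e \<Longrightarrow> e \<cdot> e = e \<Longrightarrow> e \<in> idems S"
  unfolding idems_def composable_def by auto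

lemma star_idem: "e \<in> idems S \<Longrightarrow> st e = e"
  using idemsD[of e] inverse_unique[of e e] unfolding is_inverse_def composable_def by auto

lemma idem_absorb:
  "e \<cdot> e = e \<Longrightarrow> e \<in> arr S \<Longrightarrow> x \<in> arr S \<Longrightarrow> dom S e = cod S e \<Longrightarrow> dom S e = cod S x
    \<Longrightarrow> e \<cdot> (e \<cdot> x) = e \<cdot> x"
  by (metis mult_assoc)

lemma star_mult_idem: "s \<in> arr S \<Longrightarrow> st s \<cdot> s \<in> idems S"
  and mult_star_idem: "s \<in> arr S \<Longrightarrow> s \<cdot> st s \<in> idems S"
  by (auto intro!: idemsI)

text \<open>With \<open>x = (e f)\<^sup>*\<close>, the arrow \<open>f x e\<close> is another inverse of \<open>e f\<close>; uniqueness of inverses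
  then makes \<open>x\<close>, and so \<open>e f = x\<^sup>*\<close>, idempotent.\<close>

lemma idem_mult_idem_par:
  assumes e: "e \<in> idems S" and f: "f \<in> idems S" and par: "dom S e = dom S f"
  shows "e \<cdot> f \<in> idems S"
proof -
  have ea: "e \<in> arr S" "dom S e = cod S e" "e \<cdot> e = e" using idemsD[OF e] by auto
  have fa: "f \<in> arr S" "dom S f = cod S f" "f \<cdot> f = f" using idemsD[OF f] by auto
  have efa: "e \<cdot> f \<in> arr S" using ea fa par by simp
  define x where "x = st (e \<cdot> f)"
  have xa: "x \<in> arr S" "dom S x = dom S e" "cod S x = dom S e"
    using efa ea fa par by (auto simp: x_def)
  have efxef: "e \<cdot> (f \<cdot> (x \<cdot> (e \<cdot> f))) = e \<cdot> f"
    using mult_star_mult[OF efa] ea fa par xa by (simp del: mult_star_mult add: x_def)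
  have xefx: "x \<cdot> (e \<cdot> (f \<cdot> x)) = x"
    using star_mult_star[OF efa] ea fa par xa by (simp del: star_mult_star add: x_def)
  have xefxe: "x \<cdot> (e \<cdot> (f \<cdot> (x \<cdot> e))) = x \<cdot> e"
  proof -
    have "(x \<cdot> (e \<cdot> (f \<cdot> x))) \<cdot> e = x \<cdot> e" using xefx by simp
    thus ?thesis using ea fa par xa by simp
  qed
  define y where "y = f \<cdot> (x \<cdot> e)"
  have ya: "y \<in> arr S" "dom S y = dom S e" "cod S y = dom S e"
    using xa ea fa par by (auto simp: y_def)
  have "is_inverse S (e \<cdot> f) y"
    unfolding is_inverse_def composable_def
  proof (intro conjI)
    show "(e \<cdot> f) \<cdot> y \<cdot> (e \<cdot> f) = e \<cdot> f"
      using ea fa par xa ya efxef by (simp add: y_def idem_absorb)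
    show "y \<cdot> (e \<cdot> f) \<cdot> y = y"
      using ea fa par xa ya xefxe by (simp add: y_def idem_absorb)
  qed (use ya efa ea fa par in auto)
  hence yx: "y = x" using inverse_unique efa x_def by blast
  have "x \<cdot> x = y \<cdot> y" using yx by simp
  also have "\<dots> = f \<cdot> (x \<cdot> (e \<cdot> (f \<cdot> (x \<cdot> e))))"
    using ea fa par xa by (simp add: y_def idem_absorb)
  also have "\<dots> = x" using xefxe yx by (simp add: y_def)
  finally have "x \<in> idems S" using xa by (auto intro: idemsI)
  thus ?thesis using star_idem star_star[OF efa] x_def by metis
qed

lemma idems_commute:
  assumes e: "e \<in> idems S" and f: "f \<in> idems S" and par: "dom S e = dom S f"
  shows "e \<cdot> f = f \<cdot> e"
proof -
  have ea: "e \<in> arr S" "dom S e = cod S e" "e \<cdot> e = e" using idemsD[OF e] by auto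
  have fa: "f \<in> arr S" "dom S f = cod S f" "f \<cdot> f = f" using idemsD[OF f] by auto
  have ef: "e \<cdot> f \<in> idems S" and fe: "f \<cdot> e \<in> idems S"
    using idem_mult_idem_par e f par by auto
  have "is_inverse S (e \<cdot> f) (f \<cdot> e)"
    unfolding is_inverse_def composable_def
  proof (intro conjI)
    show "(e \<cdot> f) \<cdot> (f \<cdot> e) \<cdot> (e \<cdot> f) = e \<cdot> f"
      using ea fa par idemsD[OF ef] by (simp add: idem_absorb)
    show "(f \<cdot> e) \<cdot> (e \<cdot> f) \<cdot> (f \<cdot> e) = f \<cdot> e"
      using ea fa par idemsD[OF fe] by (simp add: idem_absorb)
  qed (use ea fa par in auto)
  hence "f \<cdot> e = st (e \<cdot> f)" using inverse_unique ea fa par by simp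
  thus ?thesis using star_idem[OF ef] by simp
qed

lemma idem_mult_idem:
  "e \<in> idems S \<Longrightarrow> f \<in> idems S \<Longrightarrow> dom S e = cod S f \<Longrightarrow> e \<cdot> f \<in> idems S"
  using idem_mult_idem_par idemsD by metis

lemma idems_commute_left:
  "e \<in> idems S \<Longrightarrow> f \<in> idems S \<Longrightarrow> dom S e = dom S f \<Longrightarrow> x \<in> arr S \<Longrightarrow> dom S f = cod S x
    \<Longrightarrow> e \<cdot> (f \<cdot> x) = f \<cdot> (e \<cdot> x)"
  by (metis mult_assoc idems_commute idemsD)

lemma conjugate_idem:
  assumes t: "t \<in> arr S" and e: "e \<in> idems S" and d: "dom S t = cod S e"
  shows "t \<cdot> (e \<cdot> st t) \<in> idems S"
proof -
  have ea: "e \<in> arr S" "dom S e = cod S e" "e \<cdot> e = e" using idemsD[OF e] by auto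
  have "e \<cdot> ((st t \<cdot> t) \<cdot> (e \<cdot> st t)) = (st t \<cdot> t) \<cdot> (e \<cdot> (e \<cdot> st t))"
    using idems_commute_left[OF e star_mult_idem[OF t], of "e \<cdot> st t"] t ea d by simp
  hence "e \<cdot> (st t \<cdot> (t \<cdot> (e \<cdot> st t))) = st t \<cdot> (t \<cdot> (e \<cdot> (e \<cdot> st t)))"
    using t ea d by simp
  hence "t \<cdot> (e \<cdot> st t) \<cdot> (t \<cdot> (e \<cdot> st t)) = t \<cdot> (e \<cdot> st t)"
    using t ea d by (simp add: idem_absorb)
  thus ?thesis using t ea d by (auto intro!: idemsI)
qed

lemma idem_mult_eq_mult_idem:
  assumes h: "h \<in> idems S" and y: "y \<in> arr S" and d: "dom S h = cod S y"
  shows "h \<cdot> y = y \<cdot> (st y \<cdot> (h \<cdot> y))" and "st y \<cdot> (h \<cdot> y) \<in> idems S"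
proof -
  have ha: "h \<in> arr S" "dom S h = cod S h" "h \<cdot> h = h" using idemsD[OF h] by auto
  have "(y \<cdot> st y) \<cdot> (h \<cdot> y) = h \<cdot> ((y \<cdot> st y) \<cdot> y)"
    using idems_commute_left[OF mult_star_idem[OF y] h, of y] y ha d by simp
  thus "h \<cdot> y = y \<cdot> (st y \<cdot> (h \<cdot> y))" using y ha d by simp
  show "st y \<cdot> (h \<cdot> y) \<in> idems S"
    using conjugate_idem[OF star_arr[OF y] h] y ha d by simp
qed

lemma npoD: "npo S r t \<Longrightarrow> r \<in> arr S \<and> t \<in> arr S \<and> dom S r = dom S t \<and> cod S r = cod S t"
  unfolding npo_def by auto

lemma npoI:
  "r \<in> arr S \<Longrightarrow> t \<in> arr S \<Longrightarrow> dom S r = dom S t \<Longrightarrow> cod S r = cod S t \<Longrightarrow> e \<in> idems S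
    \<Longrightarrow> dom S t = cod S e \<Longrightarrow> r = t \<cdot> e \<Longrightarrow> npo S r t"
  unfolding npo_def composable_def by (auto simp: idems_def)

lemma npo_refl: "s \<in> arr S \<Longrightarrow> npo S s s"
  by (rule npoI[where e="st s \<cdot> s"]) (auto intro: star_mult_idem)

lemma npo_eq_mult_star_mult:
  assumes "npo S r t" shows "r = t \<cdot> (st r \<cdot> r)"
proof -
  obtain f where f: "f \<in> idems S" "dom S t = cod S f" "r = t \<cdot> f" and ra: "r \<in> arr S" "t \<in> arr S"
    using assms unfolding npo_def composable_def by auto
  have fa: "f \<in> arr S" "dom S f = cod S f" "f \<cdot> f = f" using idemsD[OF f(1)] by auto
  have rf: "r \<cdot> f = r" using f fa ra by (simp add: idem_absorb)
  have df: "dom S r = dom S f" using f fa ra by simp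
  have "f \<cdot> (st r \<cdot> r) = (st r \<cdot> r) \<cdot> f"
    using idems_commute[OF star_mult_idem[OF ra(1)] f(1)] ra df by simp
  also have "\<dots> = st r \<cdot> r" using rf ra fa df by simp
  finally have "t \<cdot> (st r \<cdot> r) = (t \<cdot> f) \<cdot> (st r \<cdot> r)" using ra fa f(1,2) df by simp
  also have "\<dots> = r" by (subst f(3)[symmetric], rule mult_star_mult[OF ra(1)])
  finally show ?thesis by simp
qed

lemma npo_idem_imp_idem: assumes "npo S r e" "e \<in> idems S" shows "r \<in> idems S"
proof -
  obtain f where "f \<in> idems S" "dom S e = cod S f" "r = e \<cdot> f"
    using assms(1) unfolding npo_def composable_def by auto
  thus ?thesis using idem_mult_idem assms(2) by simp
qed

lemma sigma_sym: "(s, t) \<in> sigma S \<Longrightarrow> (t, s) \<in> sigma S"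
  unfolding sigma_def by blast

lemma sigma_parallel:
  "(s, t) \<in> sigma S \<Longrightarrow> s \<in> arr S \<and> t \<in> arr S \<and> dom S s = dom S t \<and> cod S s = cod S t"
  unfolding sigma_def npo_def by auto

lemma sigma_trans: assumes "(a, b) \<in> sigma S" "(b, c) \<in> sigma S" shows "(a, c) \<in> sigma S"
proof -
  obtain r1 where r1: "npo S r1 a" "npo S r1 b" using assms(1) unfolding sigma_def by blast
  obtain r2 where r2: "npo S r2 b" "npo S r2 c" using assms(2) unfolding sigma_def by blast
  define e1 where "e1 = st r1 \<cdot> r1"
  define e2 where "e2 = st r2 \<cdot> r2"
  have p: "a \<in> arr S" "b \<in> arr S" "c \<in> arr S" "r1 \<in> arr S" "r2 \<in> arr S"
    "dom S r1 = dom S b" "dom S r2 = dom S b" "dom S a = dom S b" "dom S c = dom S b" "cod S a = cod S b" "cod S c = cod S b"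
    using npoD[OF r1(1)] npoD[OF r1(2)] npoD[OF r2(1)] npoD[OF r2(2)] by auto
  have e1: "e1 \<in> idems S" "e1 \<in> arr S" "dom S e1 = dom S b" "cod S e1 = dom S b"
    using star_mult_idem idemsD p by (auto simp: e1_def)
  have e2: "e2 \<in> idems S" "e2 \<in> arr S" "dom S e2 = dom S b" "cod S e2 = dom S b"
    using star_mult_idem idemsD p by (auto simp: e2_def)
  have e12: "e1 \<cdot> e2 = e2 \<cdot> e1" "e1 \<cdot> e2 \<in> idems S"
    using idems_commute idem_mult_idem_par e1 e2 by auto
  have ab: "a \<cdot> e1 = b \<cdot> e1" and cb: "c \<cdot> e2 = b \<cdot> e2"
    using npo_eq_mult_star_mult r1 r2 e1_def e2_def by metis+
  have "a \<cdot> (e1 \<cdot> e2) = (a \<cdot> e1) \<cdot> e2" using p e1 e2 by simp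
  also have "\<dots> = (b \<cdot> e2) \<cdot> e1" using ab p e1 e2 e12(1) by simp
  also have "\<dots> = (c \<cdot> e2) \<cdot> e1" using cb by simp
  also have "\<dots> = c \<cdot> (e1 \<cdot> e2)" using p e1 e2 e12(1) by simp
  finally have "a \<cdot> (e1 \<cdot> e2) = c \<cdot> (e1 \<cdot> e2)" .
  hence "npo S (a \<cdot> (e1 \<cdot> e2)) a" "npo S (a \<cdot> (e1 \<cdot> e2)) c"
    using p e1 e2 e12 by (auto intro!: npoI[where e="e1 \<cdot> e2"])
  thus ?thesis unfolding sigma_def using p by blast
qed

lemma equiv_sigma: "equiv (arr S) (sigma S)"
proof (rule equivI)
  show "refl_on (arr S) (sigma S)"
    using npo_refl sigma_parallel unfolding refl_on_def sigma_def by blast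
  show "sym (sigma S)" unfolding sym_def using sigma_sym by blast
  show "trans (sigma S)" unfolding trans_def using sigma_trans by blast
qed (use sigma_parallel in auto)

lemma sigma_idem_iff_above_idem:
  assumes s: "s \<in> arr S"
  shows "(\<exists>e\<in>idems S. (s, e) \<in> sigma S) \<longleftrightarrow> (\<exists>e\<in>idems S. npo S e s)"
proof
  assume "\<exists>e\<in>idems S. (s, e) \<in> sigma S"
  then obtain e r where "e \<in> idems S" "npo S r s" "npo S r e" unfolding sigma_def by blast
  thus "\<exists>e\<in>idems S. npo S e s" using npo_idem_imp_idem by blast
next
  assume "\<exists>e\<in>idems S. npo S e s"
  then obtain e where "e \<in> idems S" "npo S e s" by blast
  moreover have "e \<in> arr S" using \<open>e \<in> idems S\<close> idemsD by blast
  ultimately show "\<exists>e\<in>idems S. (s, e) \<in> sigma S" using s npo_refl unfolding sigma_def by blast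
qed

lemma sigma_square_iff_sigma_idem:
  assumes x: "x \<in> arr S" "dom S x = cod S x"
  shows "(x \<cdot> x, x) \<in> sigma S \<longleftrightarrow> (\<exists>e\<in>idems S. (x, e) \<in> sigma S)"
proof
  assume "(x \<cdot> x, x) \<in> sigma S"
  then obtain r where r: "npo S r (x \<cdot> x)" "npo S r x" unfolding sigma_def by blast
  have p: "r \<in> arr S" "dom S r = dom S x" "cod S r = cod S x" using npoD[OF r(2)] by auto
  have xr: "x \<cdot> (st r \<cdot> r) = r" using npo_eq_mult_star_mult[OF r(2)] by (rule sym)
  have "r = (x \<cdot> x) \<cdot> (st r \<cdot> r)" using npo_eq_mult_star_mult r by blast
  also have "\<dots> = x \<cdot> (x \<cdot> (st r \<cdot> r))" using x p by simp
  also have "\<dots> = x \<cdot> r" using xr by simp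
  finally have "r \<cdot> st r = (x \<cdot> r) \<cdot> st r" by (rule arg_cong)
  also have "\<dots> = x \<cdot> (r \<cdot> st r)" using x p by simp
  finally have "r \<cdot> st r = x \<cdot> (r \<cdot> st r)" .
  hence "npo S (r \<cdot> st r) x"
    using mult_star_idem p x by (intro npoI[where e="r \<cdot> st r"]) auto
  moreover have "npo S (r \<cdot> st r) (r \<cdot> st r)" using npo_refl p by simp
  ultimately show "\<exists>e\<in>idems S. (x, e) \<in> sigma S"
    using mult_star_idem[OF p(1)] x p idemsD unfolding sigma_def by blast
next
  assume "\<exists>e\<in>idems S. (x, e) \<in> sigma S"
  then obtain e where "e \<in> idems S" "npo S e x"
    using sigma_idem_iff_above_idem x by blast
  hence "x \<cdot> e = e" using npo_eq_mult_star_mult star_idem idemsD by metis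
  hence "e = (x \<cdot> x) \<cdot> e" using npoD[OF \<open>npo S e x\<close>] x by simp
  hence "npo S e (x \<cdot> x)" using npoD[OF \<open>npo S e x\<close>] x \<open>e \<in> idems S\<close> idemsD
    by (intro npoI[where e=e]) auto
  thus "(x \<cdot> x, x) \<in> sigma S" using \<open>npo S e x\<close> x unfolding sigma_def by auto
qed

lemma pi_sigma_eq_iff:
  "s \<in> arr S \<Longrightarrow> t \<in> arr S \<Longrightarrow> pi_sigma S s = pi_sigma S t \<longleftrightarrow> (s, t) \<in> sigma S"
  unfolding pi_sigma_def by (rule eq_equiv_class_iff[OF equiv_sigma])

lemma quot_idems_iff:
  assumes s: "s \<in> arr S"
  shows "pi_sigma S s \<in> idems (quot_sigma S) \<longleftrightarrow> (\<exists>e\<in>idems S. (s, e) \<in> sigma S)"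
proof -
  define x where "x = (SOME x. x \<in> pi_sigma S s)"
  have "x \<in> pi_sigma S s"
    using someI[of "\<lambda>x. x \<in> pi_sigma S s"] equiv_class_self[OF equiv_sigma s]
    unfolding x_def pi_sigma_def by blast
  hence sx: "(s, x) \<in> sigma S" unfolding pi_sigma_def by simp
  hence x: "x \<in> arr S" using sigma_parallel by blast
  have "pi_sigma S s \<in> idems (quot_sigma S) \<longleftrightarrow>
      dom S x = cod S x \<and> pi_sigma S (x \<cdot> x) = pi_sigma S s"
    using s unfolding idems_def composable_def quot_sigma_def x_def by auto
  also have "\<dots> \<longleftrightarrow> dom S x = cod S x \<and> (x \<cdot> x, x) \<in> sigma S"
  proof (intro conj_cong refl)
    assume "dom S x = cod S x"
    hence "pi_sigma S (x \<cdot> x) = pi_sigma S s \<longleftrightarrow> (x \<cdot> x, s) \<in> sigma S"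
      using pi_sigma_eq_iff x s by simp
    also have "\<dots> \<longleftrightarrow> (x \<cdot> x, x) \<in> sigma S"
      using sx sigma_sym sigma_trans by blast
    finally show "pi_sigma S (x \<cdot> x) = pi_sigma S s \<longleftrightarrow> (x \<cdot> x, x) \<in> sigma S" .
  qed
  also have "\<dots> \<longleftrightarrow> (\<exists>e\<in>idems S. (x, e) \<in> sigma S)"
    using sigma_square_iff_sigma_idem[OF x] sigma_parallel idemsD by metis
  also have "\<dots> \<longleftrightarrow> (\<exists>e\<in>idems S. (s, e) \<in> sigma S)"
    using sx sigma_sym sigma_trans by blast
  finally show ?thesis .
qed

lemma E_unitary_iff_quot:
  "E_unitary S \<longleftrightarrow> (\<forall>s\<in>arr S. pi_sigma S s \<in> idems (quot_sigma S) \<longrightarrow> s \<in> idems S)"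
  unfolding E_unitary_def idempotent_pure_def using quot_idems_iff sigma_parallel by blast

lemma E_unitary_iff_above_idem:
  "E_unitary S \<longleftrightarrow> (\<forall>s e. s \<in> arr S \<and> e \<in> idems S \<and> npo S e s \<longrightarrow> s \<in> idems S)"
  unfolding E_unitary_def idempotent_pure_def
  using sigma_idem_iff_above_idem sigma_parallel by blast

lemma sigma_prod_idem_if_above_idem_closed:
  assumes closed: "\<forall>s e. s \<in> arr S \<and> e \<in> idems S \<and> npo S e s \<longrightarrow> s \<in> idems S"
    and sigma: "(s, t) \<in> sigma S"
  shows "prod_idem S (st s) t \<and> prod_idem S s (st t)"
proof -
  obtain r where r: "npo S r s" "npo S r t" using sigma unfolding sigma_def by blast
  define e where "e = st r \<cdot> r"
  have p: "r \<in> arr S" "s \<in> arr S" "t \<in> arr S" "dom S r = dom S s" "cod S r = cod S s"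
    "dom S r = dom S t" "cod S r = cod S t"
    using npoD[OF r(1)] npoD[OF r(2)] by auto
  have e: "e \<in> idems S" "e \<in> arr S" "dom S e = dom S r" "cod S e = dom S r" "e \<cdot> e = e"
    using star_mult_idem[OF p(1)] idemsD p by (auto simp: e_def)
  have rs: "r = s \<cdot> e" and rt: "r = t \<cdot> e" using npo_eq_mult_star_mult r e_def by auto
  have "st s \<cdot> r = (st s \<cdot> s) \<cdot> e" using rs p e by simp
  hence "st s \<cdot> r \<in> idems S" using idem_mult_idem[OF star_mult_idem[OF p(2)] e(1)] p e by simp
  moreover have "st s \<cdot> r = (st s \<cdot> t) \<cdot> e" using rt p e by simp
  hence "npo S (st s \<cdot> r) (st s \<cdot> t)" using p e by (intro npoI[where e=e]) auto
  ultimately have "st s \<cdot> t \<in> idems S" using closed p by (metis mult_arr star_arr dom_star)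
  define h where "h = t \<cdot> (e \<cdot> st t)"
  have h: "h \<in> idems S" unfolding h_def using conjugate_idem[OF p(3) e(1)] p e by simp
  have hr: "h = r \<cdot> st t" using rt p e by (simp add: h_def)
  have "(s \<cdot> st t) \<cdot> h = s \<cdot> ((st t \<cdot> t) \<cdot> (e \<cdot> st t))" using p e by (simp add: h_def)
  also have "(st t \<cdot> t) \<cdot> (e \<cdot> st t) = e \<cdot> ((st t \<cdot> t) \<cdot> st t)"
    using idems_commute_left[OF e(1) star_mult_idem[OF p(3)], of "st t"] p e by simp
  also have "(st t \<cdot> t) \<cdot> st t = st t" using p by simp
  also have "s \<cdot> (e \<cdot> st t) = h" using rs hr p e by simp
  finally have "npo S h (s \<cdot> st t)" using p e h idemsD[OF h] hr by (intro npoI[where e=h]) auto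
  hence "s \<cdot> st t \<in> idems S" using closed h p by (metis mult_arr star_arr cod_star)
  thus ?thesis unfolding prod_idem_def composable_def using \<open>st s \<cdot> t \<in> idems S\<close> p by auto
qed

text \<open>If \<open>e = s f \<le> s\<close>, then \<open>e \<le> s s\<^sup>*\<close> as well, so \<open>s \<sigma> s s\<^sup>*\<close> and \<open>s\<^sup>* (s s\<^sup>*) = s\<^sup>*\<close> is idempotent.\<close>

lemma above_idem_closed_if_sigma_prod_idem:
  assumes sigma_prod: "\<forall>s t. (s, t) \<in> sigma S \<longrightarrow> prod_idem S (st s) t \<and> prod_idem S s (st t)"
    and s: "s \<in> arr S" and e: "e \<in> idems S" and es: "npo S e s"
  shows "s \<in> idems S"
proof -
  obtain f where f: "f \<in> idems S" "dom S s = cod S f" "e = s \<cdot> f"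
    using es unfolding npo_def composable_def by auto
  have ea: "e \<in> arr S" "dom S e = cod S e" using idemsD[OF e] by auto
  have p: "dom S e = dom S s" "cod S e = cod S s" using npoD[OF es] by auto
  have "e = (s \<cdot> st s) \<cdot> e" using f s idemsD[OF f(1)] by simp
  hence "npo S e (s \<cdot> st s)" using ea p s e by (intro npoI[where e=e]) auto
  hence "(s, s \<cdot> st s) \<in> sigma S" using es s unfolding sigma_def by auto
  hence "prod_idem S (st s) (s \<cdot> st s)" using sigma_prod by blast
  hence "st s \<in> idems S" using s unfolding prod_idem_def by simp
  thus ?thesis using star_idem star_star s by metis
qed

lemma prod_idem_imp_sigma:
  assumes s: "s \<in> arr S" and t: "t \<in> arr S"
    and prod: "prod_idem S (st s) t" "prod_idem S s (st t)"
  shows "(s, t) \<in> sigma S"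
proof -
  have par: "cod S s = cod S t" "dom S s = dom S t"
    using prod s t unfolding prod_idem_def composable_def by auto
  have i: "st s \<cdot> t \<in> idems S" using prod unfolding prod_idem_def by auto
  define r where "r = s \<cdot> (st s \<cdot> t)"
  have "npo S r s" using s t par i by (intro npoI[where e="st s \<cdot> t"]) (auto simp: r_def)
  moreover have "r = (s \<cdot> st s) \<cdot> t" using s t par by (simp add: r_def)
  hence "npo S r t"
    using idem_mult_eq_mult_idem[OF mult_star_idem[OF s] t] s t par
    by (intro npoI[where e="st t \<cdot> ((s \<cdot> st s) \<cdot> t)"]) (auto simp: r_def)
  ultimately show ?thesis unfolding sigma_def using s t by blast
qed

end

theorem mainTheorem2:
  fixes S :: "('a, 'b) sgpd"
  assumes "inverse_semigroupoid S"
  defines "P1 \<equiv> E_unitary S"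
    and "P2 \<equiv> (\<forall>s\<in>arr S. pi_sigma S s \<in> idems (quot_sigma S) \<longrightarrow> s \<in> idems S)"
    and "P3 \<equiv> (\<forall>s t. (s, t) \<in> sigma S \<longrightarrow>
                 prod_idem S (star S s) t \<and> prod_idem S s (star S t))"
    and "P4 \<equiv> (\<forall>s\<in>arr S. \<forall>t\<in>arr S. (s, t) \<in> sigma S \<longleftrightarrow>
                 prod_idem S (star S s) t \<and> prod_idem S s (star S t))"
    and "P5 \<equiv> (\<forall>s e. s \<in> arr S \<and> e \<in> idems S \<and> npo S e s \<longrightarrow> s \<in> idems S)"
  shows "(P1 \<longleftrightarrow> P2) \<and> (P2 \<longleftrightarrow> P3) \<and> (P3 \<longleftrightarrow> P4) \<and> (P4 \<longleftrightarrow> P5)"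
proof -
  interpret inverse_sgpd S by unfold_locales (fact assms)
  have "P1 \<longleftrightarrow> P2" unfolding P1_def P2_def by (rule E_unitary_iff_quot)
  moreover have "P1 \<longleftrightarrow> P5" unfolding P1_def P5_def by (rule E_unitary_iff_above_idem)
  moreover have "P5 \<longleftrightarrow> P3" unfolding P3_def P5_def
    using sigma_prod_idem_if_above_idem_closed above_idem_closed_if_sigma_prod_idem by blast
  moreover have "P3 \<longleftrightarrow> P4" unfolding P3_def P4_def
    using prod_idem_imp_sigma sigma_parallel by blast
  ultimately show ?thesis by blast
qed

end
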